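(* Let $X$ be a toric Fano variety, $Y$ a smooth complete toric variety of the same dimension $n$, and $f\colon X\to Y$ an equivariant birational morphism. Then for every irreducible invariant divisor $E\subset X$ we have $\rho_Y-\rho_{f(E)}\leq 3$. If $f(E)$ is a point $p\in Y$, then $\rho_Y\leq 3$, and $E$ is the only irreducible component of the exceptional divisor of $f$ contracted to $p$, unless $Y\simeq\mathbb{P}^n$; if $Y\simeq\mathbb{P}^n$, there is at most one other component of the exceptional divisor contracted to $p$.
   Context: A toric Fano variety is a smooth projective toric variety with ample anticanonical divisor; $\rho$ denotes the Picard number. Invariant means invariant under the torus action. *)

theory Defs
  imports "HOL-Analysis.Analysis"
begin

text \<open>Combinatorial model of smooth complete toric varieties of dimension n = CARD('n):
  the lattice N = Z^n sits inside real^'n; a smooth fan is encoded as a set of cones,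
  each cone being given by the (finite) set of its primitive ray generators.\<close>

definition lattice_pts :: "(real^'n) set" where
  "lattice_pts = {x. \<forall>i. x $ i \<in> \<int>}"

definition int_span :: "(real^'n) set \<Rightarrow> (real^'n) set" where
  "int_span B = {y. \<exists>c. (\<forall>v\<in>B. c v \<in> \<int>) \<and> y = (\<Sum>v\<in>B. c v *\<^sub>R v)}"

definition lattice_basis :: "(real^'n) set \<Rightarrow> bool" where
  "lattice_basis B \<longleftrightarrow> finite B \<and> independent B \<and> card B = CARD('n) \<and>
     B \<subseteq> lattice_pts \<and> int_span B = lattice_pts"

definition unimodular :: "(real^'n) set \<Rightarrow> bool" where
  "unimodular S \<longleftrightarrow> (\<exists>B. S \<subseteq> B \<and> lattice_basis B)"

definition pos_cone :: "(real^'n) set \<Rightarrow> (real^'n) set" where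
  "pos_cone S = {y. \<exists>c. (\<forall>v\<in>S. c v \<ge> 0) \<and> y = (\<Sum>v\<in>S. c v *\<^sub>R v)}"

definition smooth_fan :: "(real^'n) set set \<Rightarrow> bool" where
  "smooth_fan \<Sigma> \<longleftrightarrow> finite \<Sigma> \<and> \<Sigma> \<noteq> {} \<and>
     (\<forall>S\<in>\<Sigma>. unimodular S) \<and>
     (\<forall>S\<in>\<Sigma>. \<forall>T. T \<subseteq> S \<longrightarrow> T \<in> \<Sigma>) \<and>
     (\<forall>S\<in>\<Sigma>. \<forall>T\<in>\<Sigma>. pos_cone S \<inter> pos_cone T = pos_cone (S \<inter> T))"

definition smooth_complete_fan :: "(real^'n) set set \<Rightarrow> bool" where
  "smooth_complete_fan \<Sigma> \<longleftrightarrow> smooth_fan \<Sigma> \<and> (\<Union>S\<in>\<Sigma>. pos_cone S) = UNIV"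

text \<open>Rays (= irreducible invariant divisors), given by primitive generators.\<close>
definition rays :: "(real^'n) set set \<Rightarrow> (real^'n) set" where
  "rays \<Sigma> = {v. {v} \<in> \<Sigma>}"

text \<open>Ampleness of the anticanonical divisor -K = sum of all D_rho (toric criterion:
  the support function with value 1 on all ray generators is strictly convex):
  for every maximal cone S the linear form m with m(v) = 1 on the generators of S
  takes values < 1 on all other ray generators.\<close>
definition toric_fano :: "(real^'n) set set \<Rightarrow> bool" where
  "toric_fano \<Sigma> \<longleftrightarrow> smooth_complete_fan \<Sigma> \<and>
     (\<forall>S\<in>\<Sigma>. card S = CARD('n) \<longrightarrow>
        (\<exists>m::real^'n. (\<forall>v\<in>S. m \<bullet> v = 1) \<and> (\<forall>u\<in>rays \<Sigma> - S. m \<bullet> u < 1)))"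

definition picard_number :: "(real^'n) set set \<Rightarrow> int" where
  "picard_number \<Sigma> = int (card (rays \<Sigma>)) - int CARD('n)"

text \<open>Picard number of the orbit closure V(tau), a smooth complete toric variety of
  dimension n - dim tau whose fan Star(tau) has one ray for each cone of dimension
  dim tau + 1 containing tau.\<close>
definition orbit_picard_number :: "(real^'n) set set \<Rightarrow> (real^'n) set \<Rightarrow> int" where
  "orbit_picard_number \<Sigma> \<tau> =
     int (card {v \<in> rays \<Sigma>. v \<notin> \<tau> \<and> insert v \<tau> \<in> \<Sigma>}) - (int CARD('n) - int (card \<tau>))"

text \<open>Equivariant birational morphism X -> Y (after identifying the lattices):
  the fan of X refines the fan of Y.\<close>
definition refines :: "(real^'n) set set \<Rightarrow> (real^'n) set set \<Rightarrow> bool" where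
  "refines \<Sigma>X \<Sigma>Y \<longleftrightarrow> (\<forall>S\<in>\<Sigma>X. \<exists>T\<in>\<Sigma>Y. pos_cone S \<subseteq> pos_cone T)"

text \<open>tau is the smallest cone of the fan of Y containing the ray generated by e;
  then f(D_e) = V(tau).\<close>
definition image_cone :: "(real^'n) set set \<Rightarrow> real^'n \<Rightarrow> (real^'n) set \<Rightarrow> bool" where
  "image_cone \<Sigma>Y e \<tau> \<longleftrightarrow> \<tau> \<in> \<Sigma>Y \<and> e \<in> pos_cone \<tau> \<and>
     (\<forall>\<tau>'\<in>\<Sigma>Y. e \<in> pos_cone \<tau>' \<longrightarrow> \<tau> \<subseteq> \<tau>')"

text \<open>Irreducible components of the exceptional divisor of f mapped onto V(tau).\<close>
definition exceptional_over ::
  "(real^'n) set set \<Rightarrow> (real^'n) set set \<Rightarrow> (real^'n) set \<Rightarrow> (real^'n) set" where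
  "exceptional_over \<Sigma>X \<Sigma>Y \<tau> = {e \<in> rays \<Sigma>X. e \<notin> rays \<Sigma>Y \<and> image_cone \<Sigma>Y e \<tau>}"

definition is_Pn_fan :: "(real^'n) set set \<Rightarrow> bool" where
  "is_Pn_fan \<Sigma> \<longleftrightarrow> (\<exists>B. lattice_basis B \<and>
     \<Sigma> = {S. S \<subseteq> insert (- (\<Sum>B)) B \<and> S \<noteq> insert (- (\<Sum>B)) B})"

end

theory Submission
  imports Defs
begin

text \<open>On a maximal cone \<sigma> of a Fano fan, the linear form that is 1 on the generators of \<sigma>
  takes integral values \<le> 0 on all other rays. Hence two rays x, y lying in no common cone
  satisfy x + y = 0 or x + y is a ray, and iterating this shows that any two rays other than -x
  that are not adjacent to a ray x sum with x to 0; so at most three rays are not adjacent to x.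
  Since the fan of X refines the fan of Y, the rays of Y are rays of X, and the rays of Y that do
  not span a cone together with the image cone \<tau> of e are not adjacent to e. They number
  \<rho>(Y) - \<rho>(V(\<tau>)). If \<tau> is maximal and e' \<noteq> e is another ray of X mapped into \<tau>, all these
  rays are -e or -e', and not both occur; then Y has n + 1 rays \<tau> \<union> {-e}, and smoothness and
  completeness force it to be the fan of projective space.\<close>

lemma independent_coeffs_unique:
  fixes B :: "'a::euclidean_space set"
  assumes "independent B" "(\<Sum>b\<in>B. c b *\<^sub>R b) = (\<Sum>b\<in>B. d b *\<^sub>R b)" "b \<in> B"
  shows "c b = d b"
proof -
  have diff: "(\<Sum>b\<in>B. (c b - d b) *\<^sub>R b) = 0"
    using assms(2) by (simp add: scaleR_diff_left sum_subtractf)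
  have "finite B"
    using independent_bound assms(1) by blast
  from independentD[OF assms(1) this subset_refl diff assms(3)] show ?thesis
    by simp
qed

lemma sum_delta_scaleR:
  fixes v :: "'a::real_vector"
  assumes "finite B" "v \<in> B"
  shows "(\<Sum>b\<in>B. (if b = v then c else 0) *\<^sub>R b) = c *\<^sub>R v"
  using assms by (simp add: if_distrib[of "\<lambda>x. x *\<^sub>R _"] sum.delta' cong: if_cong)

lemma lattice_pts_add: "p \<in> lattice_pts \<Longrightarrow> q \<in> lattice_pts \<Longrightarrow> p + q \<in> lattice_pts"
  unfolding lattice_pts_def by auto

lemma lattice_pts_uminus: "p \<in> lattice_pts \<Longrightarrow> - p \<in> lattice_pts"
  unfolding lattice_pts_def by auto

lemma lattice_basis_coeff_Ints:
  assumes "lattice_basis B" "p \<in> lattice_pts" "p = (\<Sum>b\<in>B. c b *\<^sub>R b)" "b \<in> B"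
  shows "c b \<in> \<int>"
proof -
  obtain \<beta> where \<beta>: "\<forall>b\<in>B. \<beta> b \<in> \<int>" "p = (\<Sum>b\<in>B. \<beta> b *\<^sub>R b)"
    using assms(1,2) unfolding lattice_basis_def int_span_def by blast
  have "independent B"
    using assms(1) unfolding lattice_basis_def by blast
  from independent_coeffs_unique[OF this _ assms(4), of c \<beta>] have "c b = \<beta> b"
    using assms(3) \<beta>(2) by simp
  then show ?thesis
    using \<beta>(1) assms(4) by simp
qed

lemma lattice_basis_multiple_Ints:
  assumes "lattice_basis B" "v \<in> B" "p \<in> lattice_pts" "p = d *\<^sub>R v"
  shows "d \<in> \<int>"
proof -
  have "finite B"
    using assms(1) unfolding lattice_basis_def by blast
  then have "p = (\<Sum>b\<in>B. (if b = v then d else 0) *\<^sub>R b)"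
    by (simp only: sum_delta_scaleR[OF _ assms(2)] assms(4))
  from lattice_basis_coeff_Ints[OF assms(1,3) this assms(2)] show ?thesis
    by simp
qed

lemma unimodular_finite: "unimodular S \<Longrightarrow> finite S"
  unfolding unimodular_def lattice_basis_def by (auto intro: finite_subset)

lemma unimodular_independent: "unimodular S \<Longrightarrow> independent S"
  unfolding unimodular_def lattice_basis_def by (meson independent_mono)

lemma unimodular_lattice_pts: "unimodular S \<Longrightarrow> S \<subseteq> lattice_pts"
  unfolding unimodular_def lattice_basis_def by blast

lemma unimodular_card_le: "unimodular (S :: (real^'n) set) \<Longrightarrow> card S \<le> CARD('n)"
  unfolding unimodular_def lattice_basis_def by (metis card_mono)

lemma unimodular_card_eq_lattice_basis:
  assumes "unimodular (S :: (real^'n) set)" "card S = CARD('n)"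
  shows "lattice_basis S"
proof -
  obtain B where "S \<subseteq> B" "lattice_basis B"
    using assms(1) unfolding unimodular_def by blast
  moreover have "S = B"
    using calculation assms(2) unfolding lattice_basis_def by (metis card_subset_eq)
  ultimately show ?thesis
    by simp
qed

lemma half_not_Ints: "(1/2::real) \<notin> \<int>"
proof
  assume "(1/2::real) \<in> \<int>"
  then obtain k where "(1/2::real) = real_of_int k"
    by (auto elim: Ints_cases)
  then have "2 * k = 1"
    by linarith
  then show False
    by presburger
qed

lemma Ints_inverse_eq_1:
  fixes d :: real
  assumes "d \<in> \<int>" "1 / d \<in> \<int>" "d > 0"
  shows "d = 1"
proof -
  have pos_Ints_ge_1: "x \<ge> 1" if "x \<in> \<int>" "x > 0" for x :: real
    using that by (auto elim!: Ints_cases)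
  have "1 / d \<ge> 1" "d \<ge> 1"
    using pos_Ints_ge_1[OF assms(2)] pos_Ints_ge_1[OF assms(1)] assms(3) by simp_all
  then show ?thesis
    using assms(3) by (simp add: le_divide_eq)
qed

lemma unimodular_not_double:
  assumes "unimodular {v}" "p \<in> lattice_pts"
  shows "v \<noteq> 2 *\<^sub>R p"
proof
  assume "v = 2 *\<^sub>R p"
  then have "p = (1/2) *\<^sub>R v"
    by simp
  moreover obtain B where "v \<in> B" "lattice_basis B"
    using assms(1) unfolding unimodular_def by blast
  ultimately show False
    using lattice_basis_multiple_Ints assms(2) half_not_Ints by blast
qed

lemma unimodular_sum_not_double:
  assumes "unimodular S" "a \<in> S" "b \<in> S" "a \<noteq> b" "p \<in> lattice_pts"
  shows "a + b \<noteq> 2 *\<^sub>R p"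
proof
  assume double: "a + b = 2 *\<^sub>R p"
  obtain B where B: "S \<subseteq> B" "lattice_basis B"
    using assms(1) unfolding unimodular_def by blast
  then have "finite B" "a \<in> B" "b \<in> B"
    using assms(2,3) unfolding lattice_basis_def by auto
  define c where "c x = (if x = a then 1/2 else 0) + (if x = b then 1/2 else 0 :: real)" for x
  have "(\<Sum>x\<in>B. c x *\<^sub>R x) = (\<Sum>x\<in>B. (if x = a then 1/2 else 0) *\<^sub>R x)
      + (\<Sum>x\<in>B. (if x = b then 1/2 else 0) *\<^sub>R x)"
    unfolding c_def scaleR_add_left by (rule sum.distrib)
  also have "\<dots> = (1/2) *\<^sub>R a + (1/2) *\<^sub>R b"
    by (simp only: sum_delta_scaleR[OF \<open>finite B\<close> \<open>a \<in> B\<close>]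
        sum_delta_scaleR[OF \<open>finite B\<close> \<open>b \<in> B\<close>])
  also have "\<dots> = p"
    using double by (simp flip: scaleR_add_right)
  finally have "c a \<in> \<int>"
    by (rule lattice_basis_coeff_Ints[OF B(2) assms(5) sym \<open>a \<in> B\<close>])
  then show False
    unfolding c_def using assms(4) half_not_Ints by simp
qed

lemma unimodular_multiple_eq:
  assumes "unimodular {u}" "unimodular {v}" "u = d *\<^sub>R v" "d > 0"
  shows "u = v"
proof -
  obtain Bu Bv where Bu: "u \<in> Bu" "lattice_basis Bu" and Bv: "v \<in> Bv" "lattice_basis Bv"
    using assms(1,2) unfolding unimodular_def by blast
  have "u \<in> lattice_pts" "v \<in> lattice_pts"
    using assms(1,2) unimodular_lattice_pts by blast+
  moreover have "v = (1 / d) *\<^sub>R u"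
    using assms(3,4) by simp
  ultimately have "1 / d \<in> \<int>" "d \<in> \<int>"
    using lattice_basis_multiple_Ints[OF Bu(2,1)] lattice_basis_multiple_Ints[OF Bv(2,1)] assms(3)
    by blast+
  then have "d = 1"
    using Ints_inverse_eq_1 assms(4) by blast
  then show ?thesis
    using assms(3) by simp
qed

lemma independent_sum_eq:
  fixes T :: "'a::real_vector set"
  assumes "independent T" "a \<in> T" "b \<in> T" "c \<in> T" "d \<in> T" "a + b = c + d"
  shows "c = a \<or> c = b"
proof (rule ccontr)
  assume "\<not> (c = a \<or> c = b)"
  then have "a \<in> span (T - {c})" "b \<in> span (T - {c})"
    using assms(2,3) by (auto intro: span_base)
  moreover have "c = (1/2) *\<^sub>R (a + b)" if "c = d"
    using assms(6) that by (simp add: scaleR_2[symmetric])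
  moreover have "d \<in> span (T - {c})" if "c \<noteq> d"
    using assms(5) that by (auto intro: span_base)
  moreover have "c = a + b - d"
    using assms(6) by (simp add: algebra_simps)
  ultimately have "c \<in> span (T - {c})"
    by (cases "c = d") (simp_all add: span_add span_diff span_scale)
  then show False
    using assms(1,4) dependent_def by blast
qed

lemma pos_coneE:
  assumes "y \<in> pos_cone S"
  obtains c where "\<forall>v\<in>S. c v \<ge> 0" "y = (\<Sum>v\<in>S. c v *\<^sub>R v)"
  using assms unfolding pos_cone_def by blast

lemma pos_cone_eq_convex_cone_hull:
  assumes "finite S"
  shows "pos_cone S = convex_cone hull S"
proof
  show "convex_cone hull S \<subseteq> pos_cone S"
  proof (rule hull_minimal)
    show "S \<subseteq> pos_cone S"
    proof
      fix v assume "v \<in> S"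
      then show "v \<in> pos_cone S"
        unfolding pos_cone_def using sum_delta_scaleR[OF assms, of v 1]
        by (intro CollectI exI[of _ "\<lambda>x. if x = v then 1 else 0"]) simp
    qed
    have "x + y \<in> pos_cone S" if x: "x \<in> pos_cone S" and y: "y \<in> pos_cone S" for x y
    proof -
      obtain a where "\<forall>v\<in>S. a v \<ge> 0" "x = (\<Sum>v\<in>S. a v *\<^sub>R v)"
        using x by (rule pos_coneE)
      moreover obtain b where "\<forall>v\<in>S. b v \<ge> 0" "y = (\<Sum>v\<in>S. b v *\<^sub>R v)"
        using y by (rule pos_coneE)
      ultimately show ?thesis
        unfolding pos_cone_def
        by (intro CollectI exI[of _ "\<lambda>v. a v + b v"]) (simp add: scaleR_add_left sum.distrib)
    qed
    moreover have "t *\<^sub>R x \<in> pos_cone S" if x: "x \<in> pos_cone S" and t: "t \<ge> 0" for x t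
    proof -
      obtain a where "\<forall>v\<in>S. a v \<ge> 0" "x = (\<Sum>v\<in>S. a v *\<^sub>R v)"
        using x by (rule pos_coneE)
      then show ?thesis
        unfolding pos_cone_def using t
        by (intro CollectI exI[of _ "\<lambda>v. t * a v"]) (simp add: scaleR_sum_right)
    qed
    moreover have "0 \<in> pos_cone S"
      unfolding pos_cone_def by (intro CollectI exI[of _ "\<lambda>v. 0"]) simp
    ultimately show "convex_cone (pos_cone S)"
      unfolding convex_cone_iff by (intro conjI ballI allI impI)
  qed
  show "pos_cone S \<subseteq> convex_cone hull S"
  proof
    fix y assume "y \<in> pos_cone S"
    then obtain c where c: "\<forall>v\<in>S. c v \<ge> 0" "y = (\<Sum>v\<in>S. c v *\<^sub>R v)"
      by (rule pos_coneE)
    have "(\<Sum>v\<in>S'. c v *\<^sub>R v) \<in> convex_cone hull S" if "S' \<subseteq> S" for S'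
      using finite_subset[OF that assms] that
    proof (induction S' rule: finite_induct)
      case empty
      then show ?case
        by (simp add: convex_cone_hull_contains_0)
    next
      case (insert v S')
      then have "v \<in> S" "S' \<subseteq> S"
        by simp_all
      then have "c v *\<^sub>R v \<in> convex_cone hull S"
        using c(1) by (intro convex_cone_hull_mul hull_inc) simp_all
      moreover have "(\<Sum>v\<in>S'. c v *\<^sub>R v) \<in> convex_cone hull S"
        using insert.IH \<open>S' \<subseteq> S\<close> .
      ultimately show ?case
        using insert.hyps by (simp add: convex_cone_hull_add)
    qed
    then show "y \<in> convex_cone hull S"
      using c(2) by blast
  qed
qed

lemma closed_pos_cone: "finite S \<Longrightarrow> closed (pos_cone S)"
  by (simp add: pos_cone_eq_convex_cone_hull closed_convex_cone_hull)

lemma mem_pos_cone: "finite S \<Longrightarrow> v \<in> S \<Longrightarrow> v \<in> pos_cone S"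
  by (simp add: pos_cone_eq_convex_cone_hull hull_inc)

lemma pos_cone_mono: "finite T \<Longrightarrow> S \<subseteq> T \<Longrightarrow> pos_cone S \<subseteq> pos_cone T"
  by (simp add: pos_cone_eq_convex_cone_hull finite_subset hull_mono)

lemma pos_cone_scaleR: "finite S \<Longrightarrow> x \<in> pos_cone S \<Longrightarrow> t \<ge> 0 \<Longrightarrow> t *\<^sub>R x \<in> pos_cone S"
  by (simp add: pos_cone_eq_convex_cone_hull convex_cone_hull_mul)

lemma sum_mem_pos_cone: "(\<Sum>S) \<in> pos_cone S"
  unfolding pos_cone_def by (intro CollectI exI[of _ "\<lambda>v. 1"]) simp

lemma pos_cone_empty: "pos_cone {} = {0}"
  unfolding pos_cone_def by simp

lemma pos_cone_subset_span: "pos_cone S \<subseteq> span S"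
  unfolding pos_cone_def by (auto intro: span_sum span_scale span_base)

lemma pos_cone_subset_explicit:
  assumes "finite T" "F \<subseteq> T"
  shows "p \<in> pos_cone F \<longleftrightarrow>
    (\<exists>c. (\<forall>t\<in>T. c t \<ge> 0) \<and> (\<forall>t\<in>T - F. c t = 0) \<and> p = (\<Sum>t\<in>T. c t *\<^sub>R t))"
proof -
  have restrict: "(\<Sum>t\<in>T. c t *\<^sub>R t) = (\<Sum>t\<in>F. c t *\<^sub>R t)" if "\<forall>t\<in>T - F. c t = 0" for c
    using sum.mono_neutral_right[OF assms, of "\<lambda>t. c t *\<^sub>R t"] that by simp
  show ?thesis
  proof
    assume "p \<in> pos_cone F"
    then obtain c where c: "\<forall>t\<in>F. c t \<ge> 0" "p = (\<Sum>t\<in>F. c t *\<^sub>R t)"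
      by (rule pos_coneE)
    define c' where "c' t = (if t \<in> F then c t else 0)" for t
    have "(\<Sum>t\<in>F. c t *\<^sub>R t) = (\<Sum>t\<in>F. c' t *\<^sub>R t)"
      unfolding c'_def by simp
    then have "p = (\<Sum>t\<in>T. c' t *\<^sub>R t)"
      using c(2) restrict[of c'] unfolding c'_def by simp
    moreover have "\<forall>t\<in>T. c' t \<ge> 0" "\<forall>t\<in>T - F. c' t = 0"
      using c(1) unfolding c'_def by auto
    ultimately show "\<exists>c. (\<forall>t\<in>T. c t \<ge> 0) \<and> (\<forall>t\<in>T - F. c t = 0) \<and> p = (\<Sum>t\<in>T. c t *\<^sub>R t)"
      by blast
  next
    assume "\<exists>c. (\<forall>t\<in>T. c t \<ge> 0) \<and> (\<forall>t\<in>T - F. c t = 0) \<and> p = (\<Sum>t\<in>T. c t *\<^sub>R t)"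
    then obtain c where "\<forall>t\<in>T. c t \<ge> 0" "\<forall>t\<in>T - F. c t = 0" "p = (\<Sum>t\<in>T. c t *\<^sub>R t)"
      by blast
    then show "p \<in> pos_cone F"
      unfolding pos_cone_def using restrict assms(2) by blast
  qed
qed

lemma pos_cone_face:
  assumes "independent T" "F \<subseteq> T" "x \<in> pos_cone T" "y \<in> pos_cone T" "x + y \<in> pos_cone F"
  shows "x \<in> pos_cone F"
proof -
  have fin: "finite T"
    using independent_bound assms(1) by blast
  obtain a where a: "\<forall>t\<in>T. a t \<ge> 0" "x = (\<Sum>t\<in>T. a t *\<^sub>R t)"
    using assms(3) by (rule pos_coneE)
  obtain b where b: "\<forall>t\<in>T. b t \<ge> 0" "y = (\<Sum>t\<in>T. b t *\<^sub>R t)"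
    using assms(4) by (rule pos_coneE)
  obtain g where g: "\<forall>t\<in>T - F. g t = 0" "x + y = (\<Sum>t\<in>T. g t *\<^sub>R t)"
    using assms(5) unfolding pos_cone_subset_explicit[OF fin assms(2)] by blast
  have "(\<Sum>t\<in>T. (a t + b t) *\<^sub>R t) = (\<Sum>t\<in>T. g t *\<^sub>R t)"
    using a(2) b(2) g(2) by (simp add: scaleR_add_left sum.distrib)
  then have "a t + b t = g t" if "t \<in> T" for t
    using independent_coeffs_unique[OF assms(1) _ that, of "\<lambda>t. a t + b t" g] by simp
  then have "\<forall>t\<in>T - F. a t = 0"
    using a(1) b(1) g(1) by (metis DiffD1 add_nonneg_eq_0_iff)
  then show ?thesis
    unfolding pos_cone_subset_explicit[OF fin assms(2)] using a by blast
qed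

lemma pos_cone_pointed:
  assumes "independent T" "p \<in> pos_cone T" "- p \<in> pos_cone T"
  shows "p = 0"
  using pos_cone_face[OF assms(1) empty_subsetI assms(2,3)] by (simp add: pos_cone_empty)

lemma independent_mem_pos_cone_subset:
  assumes "independent T" "F \<subseteq> T" "t \<in> T" "t \<in> pos_cone F"
  shows "t \<in> F"
proof (rule ccontr)
  assume "t \<notin> F"
  then have "span F \<subseteq> span (T - {t})"
    using assms(2) by (intro span_mono) blast
  moreover have "t \<in> span F"
    using assms(4) pos_cone_subset_span by blast
  ultimately show False
    using assms(1,3) dependent_def by blast
qed

lemma sum_mem_pos_cone_subset:
  assumes "independent T" "F \<subseteq> T" "(\<Sum>T) \<in> pos_cone F"
  shows "T \<subseteq> F"
proof
  fix t assume "t \<in> T"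
  have fin: "finite T"
    using independent_bound assms(1) by blast
  have "(\<Sum>T) = t + \<Sum>(T - {t})"
    using sum.remove[OF fin \<open>t \<in> T\<close>] by simp
  moreover have "t \<in> pos_cone T"
    using mem_pos_cone[OF fin \<open>t \<in> T\<close>] .
  moreover have "\<Sum>(T - {t}) \<in> pos_cone T"
    using sum_mem_pos_cone pos_cone_mono[OF fin Diff_subset] by blast
  ultimately have "t \<in> pos_cone F"
    using pos_cone_face[OF assms(1,2), of t "\<Sum>(T - {t})"] assms(3) by simp
  then show "t \<in> F"
    using independent_mem_pos_cone_subset[OF assms(1,2) \<open>t \<in> T\<close>] by blast
qed

text \<open>By the face property, each term of a nonnegative combination of S representing w
  stays on the ray of w.\<close>
lemma generator_in_subcone:
  assumes "independent S" "independent T" "pos_cone S \<subseteq> pos_cone T" "w \<in> T" "w \<in> pos_cone S"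
  obtains s a where "s \<in> S" "a > 0" "s = a *\<^sub>R w"
proof -
  have fin: "finite S"
    using independent_bound assms(1) by blast
  obtain c where c: "\<forall>s\<in>S. c s \<ge> 0" "w = (\<Sum>s\<in>S. c s *\<^sub>R s)"
    using assms(5) by (rule pos_coneE)
  have "w \<noteq> 0"
    using assms(2,4) dependent_zero by blast
  then obtain s where s: "s \<in> S" "c s \<noteq> 0"
    using c(2) by (metis (no_types, lifting) scale_eq_0_iff sum.neutral)
  then have "c s > 0" "s \<noteq> 0"
    using c(1) assms(1) dependent_zero by force+
  have "w = c s *\<^sub>R s + (\<Sum>t\<in>S - {s}. c t *\<^sub>R t)"
    using c(2) sum.remove[OF fin s(1)] by simp
  moreover have "c s *\<^sub>R s \<in> pos_cone T"
    using pos_cone_scaleR[OF fin mem_pos_cone[OF fin s(1)]] \<open>c s > 0\<close> assms(3) by auto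
  moreover have "(\<Sum>t\<in>S - {s}. c t *\<^sub>R t) \<in> pos_cone T"
    using c(1) pos_cone_mono[OF fin, of "S - {s}"] assms(3) unfolding pos_cone_def by blast
  moreover have "w \<in> pos_cone {w}"
    by (simp add: mem_pos_cone)
  ultimately have "c s *\<^sub>R s \<in> pos_cone {w}"
    using pos_cone_face[OF assms(2), of "{w}"] assms(4) by simp
  then obtain b where b: "\<forall>v\<in>{w}. b v \<ge> 0" "c s *\<^sub>R s = (\<Sum>v\<in>{w}. b v *\<^sub>R v)"
    by (rule pos_coneE)
  have "s = (1 / c s) *\<^sub>R (c s *\<^sub>R s)"
    using \<open>c s > 0\<close> by simp
  also have "\<dots> = (b w / c s) *\<^sub>R w"
    using b(2) by simp
  finally have "s = (b w / c s) *\<^sub>R w" .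
  moreover have "b w \<noteq> 0"
    using \<open>s \<noteq> 0\<close> calculation by auto
  then have "b w / c s > 0"
    using b(1) \<open>c s > 0\<close> by simp
  ultimately show ?thesis
    using that s(1) by fastforce
qed

lemma smooth_fan_finite: "smooth_fan \<Sigma> \<Longrightarrow> finite \<Sigma>"
  unfolding smooth_fan_def Ball_def by blast

lemma smooth_fan_unimodular: "smooth_fan \<Sigma> \<Longrightarrow> S \<in> \<Sigma> \<Longrightarrow> unimodular S"
  unfolding smooth_fan_def Ball_def by blast

lemma smooth_fan_face: "smooth_fan \<Sigma> \<Longrightarrow> S \<in> \<Sigma> \<Longrightarrow> T \<subseteq> S \<Longrightarrow> T \<in> \<Sigma>"
  unfolding smooth_fan_def Ball_def by blast

lemma smooth_fan_inter:
  "smooth_fan \<Sigma> \<Longrightarrow> S \<in> \<Sigma> \<Longrightarrow> T \<in> \<Sigma> \<Longrightarrow> pos_cone S \<inter> pos_cone T = pos_cone (S \<inter> T)"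
  unfolding smooth_fan_def Ball_def by blast

lemma smooth_fan_cone_subset_rays: "smooth_fan \<Sigma> \<Longrightarrow> S \<in> \<Sigma> \<Longrightarrow> S \<subseteq> rays \<Sigma>"
  unfolding rays_def by (auto intro: smooth_fan_face)

lemma ray_unimodular: "smooth_fan \<Sigma> \<Longrightarrow> v \<in> rays \<Sigma> \<Longrightarrow> unimodular {v}"
  unfolding rays_def by (auto intro: smooth_fan_unimodular)

lemma ray_lattice_pts: "smooth_fan \<Sigma> \<Longrightarrow> v \<in> rays \<Sigma> \<Longrightarrow> v \<in> lattice_pts"
  using ray_unimodular unimodular_lattice_pts by blast

lemma ray_nonzero: "smooth_fan \<Sigma> \<Longrightarrow> v \<in> rays \<Sigma> \<Longrightarrow> v \<noteq> 0"
  using ray_unimodular unimodular_independent dependent_zero by blast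

lemma finite_rays: "smooth_fan \<Sigma> \<Longrightarrow> finite (rays \<Sigma>)"
proof -
  assume fan: "smooth_fan \<Sigma>"
  have "rays \<Sigma> \<subseteq> \<Union>\<Sigma>"
    unfolding rays_def by auto
  moreover have "finite (\<Union>\<Sigma>)"
    using smooth_fan_finite[OF fan] smooth_fan_unimodular[OF fan] unimodular_finite by blast
  ultimately show ?thesis
    by (rule finite_subset)
qed

lemma ray_mem_cone:
  assumes "smooth_fan \<Sigma>" "w \<in> rays \<Sigma>" "T \<in> \<Sigma>" "w \<in> pos_cone T"
  shows "w \<in> T"
proof (rule ccontr)
  assume "w \<notin> T"
  have "{w} \<in> \<Sigma>"
    using assms(2) unfolding rays_def by simp
  then have "pos_cone {w} \<inter> pos_cone T = {0}"
    using smooth_fan_inter[OF assms(1) _ assms(3)] \<open>w \<notin> T\<close> by (simp add: pos_cone_empty)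
  moreover have "w \<in> pos_cone {w}"
    by (simp add: mem_pos_cone)
  ultimately show False
    using assms(4) ray_nonzero[OF assms(1,2)] by blast
qed

lemma complete_fan_cover: "smooth_complete_fan \<Sigma> \<Longrightarrow> \<exists>C\<in>\<Sigma>. p \<in> pos_cone C"
  unfolding smooth_complete_fan_def by blast

lemma complete_fan_smooth_fan: "smooth_complete_fan \<Sigma> \<Longrightarrow> smooth_fan \<Sigma>"
  unfolding smooth_complete_fan_def by blast

lemma complete_fan_cone_towards:
  fixes \<Sigma> :: "(real^'n) set set"
  assumes complete: "smooth_complete_fan \<Sigma>" and "u \<noteq> 0"
  obtains C t where "C \<in> \<Sigma>" "q \<in> pos_cone C" "t > 0" "q + t *\<^sub>R u \<in> pos_cone C"
proof -
  have fan: "smooth_fan \<Sigma>"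
    using complete by (rule complete_fan_smooth_fan)
  define L where "L = open_segment q (q + u)"
  define \<Sigma>' where "\<Sigma>' = {C \<in> \<Sigma>. pos_cone C \<inter> L \<noteq> {}}"
  have "L \<subseteq> (\<Union>C\<in>\<Sigma>'. pos_cone C)"
    unfolding \<Sigma>'_def using complete_fan_cover[OF complete] by blast
  moreover have "closed (\<Union>C\<in>\<Sigma>'. pos_cone C)"
  proof (rule closed_UN)
    show "finite \<Sigma>'"
      using smooth_fan_finite[OF fan] unfolding \<Sigma>'_def by simp
    show "\<forall>C\<in>\<Sigma>'. closed (pos_cone C)"
      using closed_pos_cone unimodular_finite smooth_fan_unimodular[OF fan]
      unfolding \<Sigma>'_def by blast
  qed
  ultimately have "closure L \<subseteq> (\<Union>C\<in>\<Sigma>'. pos_cone C)"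
    by (rule closure_minimal)
  moreover have "q \<in> closure L"
    unfolding L_def using assms(2) by simp
  ultimately obtain C x where "C \<in> \<Sigma>" "q \<in> pos_cone C" "x \<in> pos_cone C" "x \<in> L"
    unfolding \<Sigma>'_def by blast
  moreover obtain t where "t > 0" "x = q + t *\<^sub>R u"
    using \<open>x \<in> L\<close> unfolding L_def in_segment by (auto simp: algebra_simps)
  ultimately show ?thesis
    using that by blast
qed

text \<open>Otherwise take u outside span T. Some cone C contains the sum q of the generators of T
  and a point q + t u with t > 0; by the fan axiom q lies in the face T \<inter> C, so T \<subseteq> C,
  C = T by maximality, and u \<in> span T.\<close>
lemma complete_fan_maximal_cone_card:
  fixes \<Sigma> :: "(real^'n) set set"
  assumes complete: "smooth_complete_fan \<Sigma>" and T: "T \<in> \<Sigma>"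
    and maximal: "\<And>C. C \<in> \<Sigma> \<Longrightarrow> T \<subseteq> C \<Longrightarrow> C = T"
  shows "card T = CARD('n)"
proof (rule ccontr)
  assume "card T \<noteq> CARD('n)"
  have fan: "smooth_fan \<Sigma>"
    using complete by (rule complete_fan_smooth_fan)
  have indep: "independent T"
    using smooth_fan_unimodular[OF fan T] unimodular_independent by blast
  have "card T < CARD('n)"
    using unimodular_card_le smooth_fan_unimodular[OF fan T] \<open>card T \<noteq> CARD('n)\<close> by fastforce
  have "span T \<noteq> UNIV"
  proof
    assume "span T = UNIV"
    then have "dim (UNIV :: (real^'n) set) = card T"
      using dim_span_eq_card_independent[OF indep] by simp
    then show False
      using \<open>card T < CARD('n)\<close> by simp
  qed
  then obtain u where u: "u \<notin> span T"
    by blast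
  then have "u \<noteq> 0"
    using span_zero by blast
  define q where "q = \<Sum>T"
  obtain C t where C: "C \<in> \<Sigma>" "q \<in> pos_cone C" "t > 0" "q + t *\<^sub>R u \<in> pos_cone C"
    using complete_fan_cone_towards[OF complete \<open>u \<noteq> 0\<close>] .
  have "q \<in> pos_cone (T \<inter> C)"
    using smooth_fan_inter[OF fan T C(1)] C(2) sum_mem_pos_cone unfolding q_def by blast
  then have "T \<subseteq> C"
    using sum_mem_pos_cone_subset[OF indep, of "T \<inter> C"] unfolding q_def by blast
  then have "q + t *\<^sub>R u \<in> span T"
    using maximal[OF C(1)] C(4) pos_cone_subset_span by blast
  moreover have "q \<in> span T"
    unfolding q_def by (simp add: span_sum span_base)
  ultimately have "t *\<^sub>R u \<in> span T"
    using span_diff by fastforce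
  then show False
    using u \<open>t > 0\<close> span_scale[of "t *\<^sub>R u" T "1 / t"] by simp
qed

lemma complete_fan_maximal_cone:
  fixes \<Sigma> :: "(real^'n) set set"
  assumes complete: "smooth_complete_fan \<Sigma>" and "S \<in> \<Sigma>"
  obtains T where "T \<in> \<Sigma>" "S \<subseteq> T" "card T = CARD('n)"
proof -
  have "finite \<Sigma>"
    using complete complete_fan_smooth_fan smooth_fan_finite by blast
  then obtain T where "T \<in> \<Sigma>" "S \<subseteq> T" "\<And>C. C \<in> \<Sigma> \<Longrightarrow> T \<subseteq> C \<Longrightarrow> C = T"
    using finite_has_maximal2[OF _ assms(2)] by (metis order.refl)
  then show ?thesis
    using that complete_fan_maximal_cone_card[OF complete] by blast
qed

lemma complete_fan_point_in_maximal_cone: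
  fixes \<Sigma> :: "(real^'n) set set"
  assumes "smooth_complete_fan \<Sigma>"
  obtains T where "T \<in> \<Sigma>" "card T = CARD('n)" "p \<in> pos_cone T"
proof -
  obtain S where S: "S \<in> \<Sigma>" "p \<in> pos_cone S"
    using complete_fan_cover[OF assms] by blast
  obtain T where "T \<in> \<Sigma>" "S \<subseteq> T" "card T = CARD('n)"
    using complete_fan_maximal_cone[OF assms S(1)] by blast
  moreover have "finite T"
    using \<open>T \<in> \<Sigma>\<close> assms complete_fan_smooth_fan smooth_fan_unimodular unimodular_finite
    by blast
  ultimately show ?thesis
    using that S(2) pos_cone_mono by blast
qed

text \<open>m is the linear form of the support function of -K on the maximal cone T.\<close>
definition anticanonical_form :: "(real^'n) set set \<Rightarrow> (real^'n) set \<Rightarrow> real^'n \<Rightarrow> bool" where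
  "anticanonical_form \<Sigma> T m \<longleftrightarrow> T \<in> \<Sigma> \<and> card T = CARD('n) \<and>
     (\<forall>v\<in>T. m \<bullet> v = 1) \<and> (\<forall>u\<in>rays \<Sigma> - T. m \<bullet> u < 1)"

definition adjacent :: "(real^'n) set set \<Rightarrow> real^'n \<Rightarrow> real^'n \<Rightarrow> bool" where
  "adjacent \<Sigma> a b \<longleftrightarrow> (\<exists>S\<in>\<Sigma>. a \<in> S \<and> b \<in> S)"

definition nonadjacent_rays :: "(real^'n) set set \<Rightarrow> real^'n \<Rightarrow> (real^'n) set" where
  "nonadjacent_rays \<Sigma> x = {y \<in> rays \<Sigma>. \<not> adjacent \<Sigma> x y}"

lemma adjacent_sym: "adjacent \<Sigma> a b \<longleftrightarrow> adjacent \<Sigma> b a"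
  unfolding adjacent_def by blast

lemma adjacent_refl: "a \<in> rays \<Sigma> \<Longrightarrow> adjacent \<Sigma> a a"
  unfolding adjacent_def rays_def by blast

locale fano_fan =
  fixes \<Sigma> :: "(real^'n) set set"
  assumes fano: "toric_fano \<Sigma>"
begin

lemma complete: "smooth_complete_fan \<Sigma>"
  using fano unfolding toric_fano_def by blast

lemma fan: "smooth_fan \<Sigma>"
  using complete by (rule complete_fan_smooth_fan)

lemma anticanonical_form_exists:
  assumes "T \<in> \<Sigma>" "card T = CARD('n)"
  obtains m where "anticanonical_form \<Sigma> T m"
  using fano assms unfolding toric_fano_def anticanonical_form_def by blast

lemma anticanonical_cone_containing_point:
  obtains T m where "anticanonical_form \<Sigma> T m" "p \<in> pos_cone T"
proof -
  obtain T where "T \<in> \<Sigma>" "card T = CARD('n)" "p \<in> pos_cone T"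
    using complete_fan_point_in_maximal_cone[OF complete] .
  then show ?thesis
    using anticanonical_form_exists that by blast
qed

lemma adjacentE:
  assumes "adjacent \<Sigma> a b"
  obtains T m where "anticanonical_form \<Sigma> T m" "a \<in> T" "b \<in> T"
proof -
  obtain S where S: "S \<in> \<Sigma>" "a \<in> S" "b \<in> S"
    using assms unfolding adjacent_def by blast
  obtain T where "T \<in> \<Sigma>" "S \<subseteq> T" "card T = CARD('n)"
    using complete_fan_maximal_cone[OF complete S(1)] .
  then show ?thesis
    using anticanonical_form_exists that S(2,3) by blast
qed

context
  fixes T m
  assumes form: "anticanonical_form \<Sigma> T m"
begin

lemma form_cone: "T \<in> \<Sigma>"
  using form unfolding anticanonical_form_def by blast

lemma form_lattice_basis: "lattice_basis T"
  using form smooth_fan_unimodular[OF fan] unimodular_card_eq_lattice_basis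
  unfolding anticanonical_form_def by blast

lemma form_independent: "independent T"
  using form_lattice_basis unfolding lattice_basis_def by blast

lemma form_finite: "finite T"
  using form_lattice_basis unfolding lattice_basis_def by blast

lemma form_inner_sum: "m \<bullet> (\<Sum>t\<in>T. c t *\<^sub>R t) = (\<Sum>t\<in>T. c t)"
  using form unfolding anticanonical_form_def by (simp add: inner_sum_right)

lemma form_Ints:
  assumes "p \<in> lattice_pts"
  shows "m \<bullet> p \<in> \<int>"
proof -
  obtain \<beta> where "\<forall>t\<in>T. \<beta> t \<in> \<int>" "p = (\<Sum>t\<in>T. \<beta> t *\<^sub>R t)"
    using form_lattice_basis assms unfolding lattice_basis_def int_span_def by blast
  then show ?thesis
    by (simp add: form_inner_sum Ints_sum)
qed

lemma form_ray_eq_1_iff: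
  assumes "u \<in> rays \<Sigma>"
  shows "m \<bullet> u = 1 \<longleftrightarrow> u \<in> T"
  using form assms unfolding anticanonical_form_def by force

text \<open>Integrality is what makes the Fano condition m(u) < 1 as strong as m(u) \<le> 0.\<close>
lemma form_ray_nonpos:
  assumes "u \<in> rays \<Sigma>" "u \<notin> T"
  shows "m \<bullet> u \<le> 0"
proof -
  have "m \<bullet> u < 1"
    using form assms unfolding anticanonical_form_def by blast
  moreover have "m \<bullet> u \<in> \<int>"
    using form_Ints ray_lattice_pts[OF fan assms(1)] by blast
  ultimately show ?thesis
    by (auto elim!: Ints_cases)
qed

lemma form_ray_le_1:
  assumes "u \<in> rays \<Sigma>"
  shows "m \<bullet> u \<le> 1"
  using form_ray_eq_1_iff[OF assms] form_ray_nonpos[OF assms] by fastforce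

lemma form_lattice_le_1:
  assumes "p \<in> pos_cone T" "p \<in> lattice_pts" "m \<bullet> p \<le> 1"
  shows "p = 0 \<or> p \<in> T"
proof -
  obtain c where c: "\<forall>t\<in>T. c t \<ge> 0" "p = (\<Sum>t\<in>T. c t *\<^sub>R t)"
    using assms(1) by (rule pos_coneE)
  have Ints: "c t \<in> \<int>" if "t \<in> T" for t
    using lattice_basis_coeff_Ints[OF form_lattice_basis assms(2) c(2) that] .
  have sum_le: "(\<Sum>t\<in>T. c t) \<le> 1"
    using assms(3) c(2) form_inner_sum by simp
  show ?thesis
  proof (cases "\<forall>t\<in>T. c t = 0")
    case True
    then show ?thesis
      using c(2) by simp
  next
    case False
    then obtain t0 where t0: "t0 \<in> T" "c t0 \<noteq> 0"
      by blast
    then have "c t0 \<ge> 1"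
      using Ints[OF t0(1)] c(1) by (auto elim!: Ints_cases)
    moreover have "(\<Sum>t\<in>T. c t) = c t0 + (\<Sum>t\<in>T - {t0}. c t)"
      using sum.remove[OF form_finite t0(1)] .
    moreover have "(\<Sum>t\<in>T - {t0}. c t) \<ge> 0"
      using c(1) by (intro sum_nonneg) simp
    ultimately have "c t0 = 1" "(\<Sum>t\<in>T - {t0}. c t) = 0"
      using sum_le by linarith+
    then have "\<forall>t\<in>T - {t0}. c t = 0"
      using sum_nonneg_eq_0_iff[of "T - {t0}" c] form_finite c(1) by simp
    then have "(\<Sum>t\<in>T - {t0}. c t *\<^sub>R t) = 0"
      by simp
    then have "p = t0"
      using c(2) sum.remove[OF form_finite t0(1), of "\<lambda>t. c t *\<^sub>R t"] \<open>c t0 = 1\<close> by simp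
    then show ?thesis
      using t0(1) by simp
  qed
qed

lemma form_sum_eq:
  assumes "a \<in> T" "b \<in> T" "c \<in> rays \<Sigma>" "d \<in> rays \<Sigma>" "a + b = c + d"
  shows "c = a \<or> c = b"
proof -
  have "T \<subseteq> rays \<Sigma>"
    using smooth_fan_cone_subset_rays[OF fan form_cone] .
  then have "m \<bullet> a = 1" "m \<bullet> b = 1"
    using form_ray_eq_1_iff assms(1,2) by blast+
  then have "m \<bullet> c + m \<bullet> d = 2"
    using assms(5) by (metis inner_add_right one_add_one)
  then have "m \<bullet> c = 1" "m \<bullet> d = 1"
    using form_ray_le_1[OF assms(3)] form_ray_le_1[OF assms(4)] by linarith+
  then have "c \<in> T" "d \<in> T"
    using form_ray_eq_1_iff assms(3,4) by blast+
  then show ?thesis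
    using independent_sum_eq[OF form_independent assms(1,2) _ _ assms(5)] by blast
qed

end

lemma nonadjacent_sum:
  assumes "a \<in> rays \<Sigma>" "b \<in> rays \<Sigma>" "\<not> adjacent \<Sigma> a b"
  shows "a + b = 0 \<or> a + b \<in> rays \<Sigma>"
proof -
  obtain T m where form: "anticanonical_form \<Sigma> T m" and "a + b \<in> pos_cone T"
    by (rule anticanonical_cone_containing_point)
  have "a \<notin> T \<or> b \<notin> T"
    using assms(3) form_cone[OF form] unfolding adjacent_def by blast
  then have "m \<bullet> (a + b) \<le> 1"
    using form_ray_nonpos[OF form] form_ray_le_1[OF form] assms(1,2)
    by (fastforce simp: inner_add_right)
  moreover have "a + b \<in> lattice_pts"
    using ray_lattice_pts[OF fan] assms(1,2) lattice_pts_add by blast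
  ultimately have "a + b = 0 \<or> a + b \<in> T"
    using form_lattice_le_1[OF form \<open>a + b \<in> pos_cone T\<close>] by blast
  then show ?thesis
    using smooth_fan_cone_subset_rays[OF fan form_cone[OF form]] by blast
qed

lemma nonadjacent_sum_adjacent:
  assumes x: "x \<in> rays \<Sigma>" and y: "y \<in> rays \<Sigma>" and "\<not> adjacent \<Sigma> x y" "y \<noteq> - x"
  shows "x + y \<in> rays \<Sigma>" "adjacent \<Sigma> x (x + y)"
proof -
  have "x + y \<noteq> 0"
    using assms(4) by (simp add: add_eq_0_iff)
  then show xy: "x + y \<in> rays \<Sigma>"
    using nonadjacent_sum[OF x y assms(3)] by blast
  show "adjacent \<Sigma> x (x + y)"
  proof (rule ccontr)
    assume "\<not> adjacent \<Sigma> x (x + y)"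
    moreover have "x + (x + y) \<noteq> 0"
    proof
      assume "x + (x + y) = 0"
      then have "y = - (x + x)"
        by (simp add: add.assoc[symmetric] add_eq_0_iff)
      then have "y = 2 *\<^sub>R (- x)"
        by (simp add: scaleR_2)
      then show False
        using unimodular_not_double[OF ray_unimodular[OF fan y]]
          lattice_pts_uminus[OF ray_lattice_pts[OF fan x]] by blast
    qed
    ultimately have xxy: "x + (x + y) \<in> rays \<Sigma>"
      using nonadjacent_sum[OF x xy] by blast
    obtain T m where form: "anticanonical_form \<Sigma> T m" and "x + y \<in> T"
      using adjacentE[OF adjacent_refl[OF xy]] by blast
    have "(x + y) + (x + y) = (x + (x + y)) + y"
      by (simp add: algebra_simps)
    then have "x + (x + y) = x + y"
      using form_sum_eq[OF form \<open>x + y \<in> T\<close> \<open>x + y \<in> T\<close> xxy y] by simp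
    then show False
      using ray_nonzero[OF fan x] by simp
  qed
qed

lemma ray_sum_not_double:
  assumes "a \<in> rays \<Sigma>" "b \<in> rays \<Sigma>" "a \<noteq> b" "p \<in> lattice_pts" "p \<noteq> 0"
  shows "a + b \<noteq> 2 *\<^sub>R p"
proof
  assume double: "a + b = 2 *\<^sub>R p"
  show False
  proof (cases "adjacent \<Sigma> a b")
    case True
    then obtain S where "S \<in> \<Sigma>" "a \<in> S" "b \<in> S"
      unfolding adjacent_def by blast
    then show False
      using unimodular_sum_not_double[OF smooth_fan_unimodular[OF fan]] double assms(3,4) by blast
  next
    case False
    then have "a + b = 0 \<or> a + b \<in> rays \<Sigma>"
      using nonadjacent_sum assms(1,2) by blast
    then show False
      using double assms(5) unimodular_not_double[OF ray_unimodular[OF fan] assms(4)] by auto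
  qed
qed

lemma nonadjacent_triple_sum_ray:
  assumes x: "x \<in> rays \<Sigma>"
    and y1: "y1 \<in> nonadjacent_rays \<Sigma> x" "y1 \<noteq> - x"
    and y: "y \<in> nonadjacent_rays \<Sigma> x" "y \<noteq> - x" "y \<noteq> y1" "x + y1 + y \<noteq> 0"
  shows "x + y1 + y \<in> rays \<Sigma>"
proof -
  have y1_ray: "y1 \<in> rays \<Sigma>" "\<not> adjacent \<Sigma> x y1" and y_ray: "y \<in> rays \<Sigma>" "\<not> adjacent \<Sigma> x y"
    using y1(1) y(1) unfolding nonadjacent_rays_def by auto
  have z1: "x + y1 \<in> rays \<Sigma>" and z: "x + y \<in> rays \<Sigma>"
    using nonadjacent_sum_adjacent(1) x y1_ray y1(2) y_ray y(2) by blast+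
  have "\<not> adjacent \<Sigma> y1 (x + y)"
  proof
    assume "adjacent \<Sigma> y1 (x + y)"
    then obtain T m where form: "anticanonical_form \<Sigma> T m" "y1 \<in> T" "x + y \<in> T"
      by (rule adjacentE)
    have "y1 + (x + y) = (x + y1) + y"
      by (simp add: algebra_simps)
    then have "x + y1 = y1 \<or> x + y1 = x + y"
      using form_sum_eq[OF form z1 y_ray(1)] by blast
    then show False
      using ray_nonzero[OF fan x] y(3) by auto
  qed
  moreover have sum_eq: "y1 + (x + y) = x + y1 + y"
    by (simp add: algebra_simps)
  ultimately show ?thesis
    using nonadjacent_sum[OF y1_ray(1) z] y(4) unfolding sum_eq by blast
qed

lemma nonadjacent_triple_sum_nonadjacent:
  assumes x: "x \<in> rays \<Sigma>"
    and y1: "y1 \<in> nonadjacent_rays \<Sigma> x" "y1 \<noteq> - x"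
    and y: "y \<in> nonadjacent_rays \<Sigma> x" "y \<noteq> - x"
  shows "\<not> adjacent \<Sigma> x (x + y1 + y)"
proof
  assume "adjacent \<Sigma> x (x + y1 + y)"
  then obtain T m where form: "anticanonical_form \<Sigma> T m" "x \<in> T" "x + y1 + y \<in> T"
    by (rule adjacentE)
  have y1_ray: "y1 \<in> rays \<Sigma>" "\<not> adjacent \<Sigma> x y1" and y_ray: "y \<in> rays \<Sigma>" "\<not> adjacent \<Sigma> x y"
    using y1(1) y(1) unfolding nonadjacent_rays_def by auto
  have z1: "x + y1 \<in> rays \<Sigma>" and z: "x + y \<in> rays \<Sigma>"
    using nonadjacent_sum_adjacent(1) x y1_ray y1(2) y_ray y(2) by blast+
  have "x + (x + y1 + y) = (x + y1) + (x + y)"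
    by (simp add: algebra_simps)
  then have "x + y1 = x \<or> x + y1 = x + y1 + y"
    using form_sum_eq[OF form z1 z] by blast
  then show False
    using ray_nonzero[OF fan] y1_ray(1) y_ray(1) by auto
qed

lemma nonadjacent_step:
  assumes x: "x \<in> rays \<Sigma>"
    and y1: "y1 \<in> nonadjacent_rays \<Sigma> x" "y1 \<noteq> - x"
    and y: "y \<in> nonadjacent_rays \<Sigma> x" "y \<noteq> - x" "y \<noteq> y1" "x + y1 + y \<noteq> 0"
  shows "x + y1 + y \<in> nonadjacent_rays \<Sigma> x" "x + y1 + y \<noteq> - x" "x + y1 + y \<noteq> y1"
    "x + y1 + (x + y1 + y) \<noteq> 0"
proof -
  have y1_ray: "y1 \<in> rays \<Sigma>" and y_ray: "y \<in> rays \<Sigma>"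
    using y1(1) y(1) unfolding nonadjacent_rays_def by auto
  show "x + y1 + y \<in> nonadjacent_rays \<Sigma> x"
    using nonadjacent_triple_sum_ray[OF x y1 y] nonadjacent_triple_sum_nonadjacent[OF x y1 y(1,2)]
    unfolding nonadjacent_rays_def by blast
  show "x + y1 + y \<noteq> - x"
  proof
    assume r_eq: "x + y1 + y = - x"
    have "y1 + y = (x + y1 + y) - x"
      by (simp add: algebra_simps)
    also have "\<dots> = 2 *\<^sub>R (- x)"
      by (simp add: r_eq scaleR_2)
    finally have "y1 + y = 2 *\<^sub>R (- x)" .
    moreover have "- x \<noteq> 0"
      using ray_nonzero[OF fan x] by simp
    ultimately show False
      using ray_sum_not_double[OF y1_ray y_ray y(3)[symmetric]
          lattice_pts_uminus[OF ray_lattice_pts[OF fan x]]] by blast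
  qed
  show "x + y1 + y \<noteq> y1"
  proof
    assume r_eq: "x + y1 + y = y1"
    have "y = (x + y1 + y) - y1 - x"
      by (simp add: algebra_simps)
    also have "\<dots> = - x"
      by (simp add: r_eq)
    finally show False
      using y(2) by blast
  qed
  show "x + y1 + (x + y1 + y) \<noteq> 0"
  proof
    assume sum_eq: "x + y1 + (x + y1 + y) = 0"
    have "y = (x + y1 + (x + y1 + y)) - 2 *\<^sub>R (x + y1)"
      by (simp add: algebra_simps scaleR_2)
    also have "\<dots> = 2 *\<^sub>R (- (x + y1))"
      by (simp only: sum_eq diff_0 scaleR_minus_right)
    finally show False
      using unimodular_not_double[OF ray_unimodular[OF fan y_ray]]
        lattice_pts_uminus[OF lattice_pts_add[OF ray_lattice_pts[OF fan x]
          ray_lattice_pts[OF fan y1_ray]]] by blast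
  qed
qed

text \<open>Otherwise the rays y2 + k (x + y1), k = 0, 1, 2, ..., would all be distinct rays of the fan.\<close>
lemma nonadjacent_pair_sum_zero:
  assumes x: "x \<in> rays \<Sigma>"
    and y1: "y1 \<in> nonadjacent_rays \<Sigma> x" "y1 \<noteq> - x"
    and y2: "y2 \<in> nonadjacent_rays \<Sigma> x" "y2 \<noteq> - x" "y2 \<noteq> y1"
  shows "x + y1 + y2 = 0"
proof (rule ccontr)
  assume "x + y1 + y2 \<noteq> 0"
  define u where "u k = of_nat k *\<^sub>R (x + y1) + y2" for k :: nat
  have "u k \<in> nonadjacent_rays \<Sigma> x \<and> u k \<noteq> - x \<and> u k \<noteq> y1 \<and> x + y1 + u k \<noteq> 0" for k
  proof (induction k)
    case 0
    then show ?case
      using y2 \<open>x + y1 + y2 \<noteq> 0\<close> unfolding u_def by simp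
  next
    case (Suc k)
    have "u (Suc k) = x + y1 + u k"
      unfolding u_def by (simp add: algebra_simps)
    then show ?case
      using nonadjacent_step[OF x y1] Suc.IH by simp
  qed
  then have "range u \<subseteq> rays \<Sigma>"
    unfolding nonadjacent_rays_def by blast
  moreover have "x + y1 \<noteq> 0"
    using y1(2) by (simp add: add_eq_0_iff)
  then have "inj u"
    unfolding u_def by (intro injI) simp
  ultimately show False
    using finite_rays[OF fan] finite_imageD finite_subset infinite_UNIV_nat by metis
qed

lemma card_nonadjacent_rays_le_3:
  assumes x: "x \<in> rays \<Sigma>"
  shows "card (nonadjacent_rays \<Sigma> x) \<le> 3"
proof -
  define N where "N = nonadjacent_rays \<Sigma> x - {- x}"
  have fin: "finite N"
    using finite_rays[OF fan] unfolding N_def nonadjacent_rays_def by simp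
  have "card N \<le> 2"
  proof (cases "N = {}")
    case False
    then obtain a where a: "a \<in> N"
      by blast
    have "N \<subseteq> {a, - (x + a)}"
    proof
      fix b assume "b \<in> N"
      then have "b = a \<or> x + a + b = 0"
        using nonadjacent_pair_sum_zero[OF x, of a b] a unfolding N_def by blast
      then show "b \<in> {a, - (x + a)}"
        by (auto simp: add_eq_0_iff)
    qed
    then have "card N \<le> card {a, - (x + a)}"
      by (rule card_mono[rotated]) simp
    also have "\<dots> \<le> 2"
      by (simp add: card_insert_if)
    finally show ?thesis .
  qed simp
  moreover have "nonadjacent_rays \<Sigma> x \<subseteq> insert (- x) N"
    unfolding N_def by blast
  then have "card (nonadjacent_rays \<Sigma> x) \<le> card (insert (- x) N)"
    using fin by (intro card_mono) simp_all
  moreover have "card (insert (- x) N) \<le> Suc (card N)"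
    using fin by (simp add: card_insert_if)
  ultimately show ?thesis
    by simp
qed

end


definition rays_outside_star :: "(real^'n) set set \<Rightarrow> (real^'n) set \<Rightarrow> (real^'n) set" where
  "rays_outside_star \<Sigma> \<tau> = {w \<in> rays \<Sigma>. w \<notin> \<tau> \<and> insert w \<tau> \<notin> \<Sigma>}"

lemma picard_number_minus_orbit_picard_number:
  assumes fan: "smooth_fan \<Sigma>" and "\<tau> \<in> \<Sigma>"
  shows "picard_number \<Sigma> - orbit_picard_number \<Sigma> \<tau> = int (card (rays_outside_star \<Sigma> \<tau>))"
proof -
  define A where "A = {v \<in> rays \<Sigma>. v \<notin> \<tau> \<and> insert v \<tau> \<in> \<Sigma>}"
  define W where "W = rays_outside_star \<Sigma> \<tau>"
  have "rays \<Sigma> = \<tau> \<union> (A \<union> W)"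
    using smooth_fan_cone_subset_rays[OF assms] unfolding A_def W_def rays_outside_star_def by blast
  moreover have "finite \<tau>" "finite A" "finite W"
    using finite_rays[OF fan] smooth_fan_unimodular[OF assms] unimodular_finite
    unfolding A_def W_def rays_outside_star_def by auto
  moreover have "\<tau> \<inter> (A \<union> W) = {}" "A \<inter> W = {}"
    unfolding A_def W_def rays_outside_star_def by auto
  ultimately have "card (rays \<Sigma>) = card \<tau> + card A + card W"
    by (simp add: card_Un_disjoint)
  then show ?thesis
    unfolding picard_number_def orbit_picard_number_def A_def[symmetric] W_def by simp
qed

lemma insert_maximal_cone_notin:
  fixes \<Sigma> :: "(real^'n) set set"
  assumes "smooth_fan \<Sigma>" "\<tau> \<in> \<Sigma>" "card \<tau> = CARD('n)" "w \<notin> \<tau>"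
  shows "insert w \<tau> \<notin> \<Sigma>"
proof
  assume "insert w \<tau> \<in> \<Sigma>"
  then have "card (insert w \<tau>) \<le> CARD('n)"
    using smooth_fan_unimodular[OF assms(1)] unimodular_card_le by blast
  moreover have "finite \<tau>"
    using smooth_fan_unimodular[OF assms(1,2)] unimodular_finite by blast
  ultimately show False
    using assms(3,4) by simp
qed

lemma rays_outside_star_maximal:
  fixes \<Sigma> :: "(real^'n) set set"
  assumes "smooth_fan \<Sigma>" "\<tau> \<in> \<Sigma>" "card \<tau> = CARD('n)"
  shows "rays_outside_star \<Sigma> \<tau> = rays \<Sigma> - \<tau>"
  using insert_maximal_cone_notin[OF assms] unfolding rays_outside_star_def by blast

lemma orbit_picard_number_maximal:
  fixes \<Sigma> :: "(real^'n) set set"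
  assumes "smooth_fan \<Sigma>" "\<tau> \<in> \<Sigma>" "card \<tau> = CARD('n)"
  shows "orbit_picard_number \<Sigma> \<tau> = 0"
proof -
  have "{v \<in> rays \<Sigma>. v \<notin> \<tau> \<and> insert v \<tau> \<in> \<Sigma>} = {}"
    using insert_maximal_cone_notin[OF assms] by blast
  then show ?thesis
    unfolding orbit_picard_number_def using assms(3) by (simp only: card.empty)
qed

lemma complete_fan_ray_outside_cone:
  assumes "smooth_complete_fan \<Sigma>" "\<tau> \<in> \<Sigma>" "e \<in> pos_cone \<tau>" "e \<noteq> 0"
  obtains w where "w \<in> rays \<Sigma>" "w \<notin> \<tau>"
proof -
  have fan: "smooth_fan \<Sigma>"
    using assms(1) by (rule complete_fan_smooth_fan)
  have \<tau>: "finite \<tau>" "independent \<tau>"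
    using smooth_fan_unimodular[OF fan assms(2)] unimodular_finite unimodular_independent by blast+
  obtain T where T: "T \<in> \<Sigma>" "- e \<in> pos_cone T"
    using complete_fan_cover[OF assms(1)] by blast
  have "\<not> T \<subseteq> \<tau>"
  proof
    assume "T \<subseteq> \<tau>"
    then have "- e \<in> pos_cone \<tau>"
      using pos_cone_mono[OF \<tau>(1)] T(2) by blast
    then show False
      using pos_cone_pointed[OF \<tau>(2) assms(3)] assms(4) by blast
  qed
  then show ?thesis
    using that smooth_fan_cone_subset_rays[OF fan T(1)] by blast
qed

lemma image_cone_coeffs_pos:
  assumes fan: "smooth_fan \<Sigma>" and img: "image_cone \<Sigma> e \<tau>"
    and e: "e = (\<Sum>t\<in>\<tau>. a t *\<^sub>R t)" "\<forall>t\<in>\<tau>. a t \<ge> 0" and "v \<in> \<tau>"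
  shows "a v > 0"
proof (rule ccontr)
  assume "\<not> a v > 0"
  then have "a v = 0"
    using e(2) \<open>v \<in> \<tau>\<close> by force
  have "finite \<tau>"
    using img smooth_fan_unimodular[OF fan] unimodular_finite unfolding image_cone_def by blast
  then have "e = (\<Sum>t\<in>\<tau> - {v}. a t *\<^sub>R t)"
    using e(1) sum.remove[OF _ \<open>v \<in> \<tau>\<close>, of "\<lambda>t. a t *\<^sub>R t"] \<open>a v = 0\<close> by simp
  then have "e \<in> pos_cone (\<tau> - {v})"
    unfolding pos_cone_def using e(2) by blast
  moreover have "\<tau> - {v} \<in> \<Sigma>"
    using img smooth_fan_face[OF fan] unfolding image_cone_def by blast
  ultimately have "\<tau> \<subseteq> \<tau> - {v}"
    using img unfolding image_cone_def by blast
  then show False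
    using \<open>v \<in> \<tau>\<close> by blast
qed

context
  fixes \<Sigma> :: "(real^'n) set set" and \<tau> :: "(real^'n) set"
    and w :: "real^'n" and a :: "real^'n \<Rightarrow> real"
  assumes complete: "smooth_complete_fan \<Sigma>" and \<tau>: "\<tau> \<in> \<Sigma>" "card \<tau> = CARD('n)"
    and rays_eq: "rays \<Sigma> = insert w \<tau>" and w_notin: "w \<notin> \<tau>"
    and w_eq: "w = - (\<Sum>t\<in>\<tau>. a t *\<^sub>R t)" and a_pos: "\<forall>t\<in>\<tau>. a t \<in> \<int> \<and> a t > 0"
begin

lemma one_extra_ray_fan: "smooth_fan \<Sigma>"
  using complete by (rule complete_fan_smooth_fan)

lemma one_extra_ray_cone: "finite \<tau>" "independent \<tau>"
  using smooth_fan_unimodular[OF one_extra_ray_fan \<tau>(1)] unimodular_finite unimodular_independent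
  by blast+

lemma one_extra_ray_opposite_cone:
  assumes "v \<in> \<tau>"
  obtains T \<gamma> g where "T \<in> \<Sigma>" "\<gamma> \<ge> 0" "\<gamma> = 0 \<or> w \<in> T" "\<forall>t\<in>\<tau>. g t \<ge> 0"
    "\<forall>t\<in>\<tau> - T. g t = 0" "- v = \<gamma> *\<^sub>R w + (\<Sum>t\<in>\<tau>. g t *\<^sub>R t)"
proof -
  obtain T where T: "T \<in> \<Sigma>" "- v \<in> pos_cone T"
    using complete_fan_cover[OF complete] by blast
  have "T \<subseteq> insert w \<tau>"
    using smooth_fan_cone_subset_rays[OF one_extra_ray_fan T(1)] rays_eq by simp
  moreover have "finite (insert w \<tau>)"
    using one_extra_ray_cone(1) by simp
  ultimately obtain c where c: "\<forall>t\<in>insert w \<tau>. c t \<ge> 0" "\<forall>t\<in>insert w \<tau> - T. c t = 0"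
      "- v = (\<Sum>t\<in>insert w \<tau>. c t *\<^sub>R t)"
    using T(2) pos_cone_subset_explicit by blast
  then have "- v = c w *\<^sub>R w + (\<Sum>t\<in>\<tau>. c t *\<^sub>R t)"
    using sum.insert[OF one_extra_ray_cone(1) w_notin] by simp
  then show ?thesis
    using that[OF T(1), of "c w" c] c(1,2) w_notin by auto
qed

text \<open>Comparing coefficients in -v = \<gamma> w + \<Sum> g t t shows \<gamma> > 0 and g t = \<gamma> a t > 0 for
  all t \<noteq> v, so the cone containing -v contains w and all generators of \<tau> except v.\<close>
lemma one_extra_ray_face:
  assumes v: "v \<in> \<tau>"
  shows "insert w (\<tau> - {v}) \<in> \<Sigma>"
proof -
  obtain T \<gamma> g where T: "T \<in> \<Sigma>" "\<gamma> \<ge> 0" "\<gamma> = 0 \<or> w \<in> T" "\<forall>t\<in>\<tau>. g t \<ge> 0"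
    "\<forall>t\<in>\<tau> - T. g t = 0" and v_eq: "- v = \<gamma> *\<^sub>R w + (\<Sum>t\<in>\<tau>. g t *\<^sub>R t)"
    using one_extra_ray_opposite_cone[OF v] .
  have gamma_w: "\<gamma> *\<^sub>R w = (\<Sum>t\<in>\<tau>. (- (\<gamma> * a t)) *\<^sub>R t)"
    unfolding w_eq by (simp add: scaleR_sum_right sum_negf)
  have "(\<Sum>t\<in>\<tau>. (- (\<gamma> * a t) + g t) *\<^sub>R t)
      = (\<Sum>t\<in>\<tau>. (- (\<gamma> * a t)) *\<^sub>R t) + (\<Sum>t\<in>\<tau>. g t *\<^sub>R t)"
    unfolding scaleR_add_left by (rule sum.distrib)
  also have "\<dots> = - v"
    by (simp only: v_eq gamma_w)
  also have "\<dots> = (\<Sum>t\<in>\<tau>. (if t = v then -1 else 0) *\<^sub>R t)"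
    using sum_delta_scaleR[OF one_extra_ray_cone(1) v, of "-1"] by simp
  finally have coeff: "- (\<gamma> * a t) + g t = (if t = v then -1 else 0)" if "t \<in> \<tau>" for t
    by (rule independent_coeffs_unique[OF one_extra_ray_cone(2) _ that])
  have "\<gamma> \<noteq> 0"
    using coeff[OF v] T(4) v by auto
  then have "g t > 0" if "t \<in> \<tau> - {v}" for t
    using coeff[of t] that T(2) a_pos by (simp add: order_le_neq_trans)
  then have "\<tau> - {v} \<subseteq> T"
    using T(5) by force
  moreover have "w \<in> T"
    using T(3) \<open>\<gamma> \<noteq> 0\<close> by blast
  ultimately show ?thesis
    using smooth_fan_face[OF one_extra_ray_fan T(1)] by blast
qed

text \<open>The lattice basis \<tau> - {v} \<union> {w} expresses v with w-coefficient -1 / a v.\<close>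
lemma one_extra_ray_coeff:
  assumes v: "v \<in> \<tau>"
  shows "a v = 1"
proof -
  define B where "B = insert w (\<tau> - {v})"
  define k where "k t = (if t = w then -1 else - a t)" for t
  have fin: "finite (\<tau> - {v})"
    using one_extra_ray_cone(1) by simp
  have "card \<tau> > 0"
    using one_extra_ray_cone(1) v card_gt_0_iff by blast
  then have "card B = CARD('n)"
    unfolding B_def using fin v w_notin \<tau>(2) by simp
  then have B: "lattice_basis B"
    using unimodular_card_eq_lattice_basis smooth_fan_unimodular[OF one_extra_ray_fan]
      one_extra_ray_face[OF v] unfolding B_def by blast
  have "(\<Sum>t\<in>\<tau> - {v}. k t *\<^sub>R t) = (\<Sum>t\<in>\<tau> - {v}. (- a t) *\<^sub>R t)"
    using w_notin by (intro sum.cong) (auto simp: k_def)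
  then have "(\<Sum>t\<in>B. k t *\<^sub>R t) = - w - (\<Sum>t\<in>\<tau> - {v}. a t *\<^sub>R t)"
    unfolding B_def using fin w_notin by (simp add: k_def sum_negf)
  also have "\<dots> = a v *\<^sub>R v"
    using w_eq sum.remove[OF one_extra_ray_cone(1) v, of "\<lambda>t. a t *\<^sub>R t"] by simp
  moreover have "a v \<noteq> 0"
    using a_pos v by fastforce
  ultimately have "v = (1 / a v) *\<^sub>R (\<Sum>t\<in>B. k t *\<^sub>R t)"
    by simp
  also have "\<dots> = (\<Sum>t\<in>B. ((1 / a v) * k t) *\<^sub>R t)"
    by (simp only: scaleR_sum_right scaleR_scaleR)
  finally have v_eq: "v = (\<Sum>t\<in>B. ((1 / a v) * k t) *\<^sub>R t)" .
  have "v \<in> lattice_pts"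
    using ray_lattice_pts[OF one_extra_ray_fan] rays_eq v by blast
  from lattice_basis_coeff_Ints[OF B this v_eq, of w] have "(1 / a v) * k w \<in> \<int>"
    unfolding B_def by blast
  then have "1 / a v \<in> \<int>"
    unfolding k_def by (simp add: minus_in_Ints_iff)
  then show ?thesis
    using Ints_inverse_eq_1 a_pos v by blast
qed

lemma one_extra_ray_fan_eq: "\<Sigma> = {S. S \<subseteq> insert w \<tau> \<and> S \<noteq> insert w \<tau>}"
proof
  show "\<Sigma> \<subseteq> {S. S \<subseteq> insert w \<tau> \<and> S \<noteq> insert w \<tau>}"
    using smooth_fan_cone_subset_rays[OF one_extra_ray_fan] rays_eq
      insert_maximal_cone_notin[OF one_extra_ray_fan \<tau> w_notin] by blast
  show "{S. S \<subseteq> insert w \<tau> \<and> S \<noteq> insert w \<tau>} \<subseteq> \<Sigma>"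
  proof
    fix S assume "S \<in> {S. S \<subseteq> insert w \<tau> \<and> S \<noteq> insert w \<tau>}"
    then have S: "S \<subseteq> insert w \<tau>" "S \<noteq> insert w \<tau>"
      by simp_all
    show "S \<in> \<Sigma>"
    proof (cases "w \<in> S")
      case False
      then show ?thesis
        using S(1) smooth_fan_face[OF one_extra_ray_fan \<tau>(1)] by blast
    next
      case True
      then obtain v where "v \<in> \<tau>" "v \<notin> S"
        using S by blast
      then show ?thesis
        using S(1) smooth_fan_face[OF one_extra_ray_fan one_extra_ray_face] by blast
    qed
  qed
qed

end

lemma complete_fan_is_Pn_fan:
  fixes \<Sigma> :: "(real^'n) set set"
  assumes complete: "smooth_complete_fan \<Sigma>" and img: "image_cone \<Sigma> e \<tau>"
    and "card \<tau> = CARD('n)" "e \<in> lattice_pts" "rays \<Sigma> - \<tau> = {- e}"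
  shows "is_Pn_fan \<Sigma>"
proof -
  have fan: "smooth_fan \<Sigma>"
    using complete by (rule complete_fan_smooth_fan)
  have \<tau>: "\<tau> \<in> \<Sigma>" "e \<in> pos_cone \<tau>"
    using img unfolding image_cone_def by blast+
  then have basis: "lattice_basis \<tau>"
    using unimodular_card_eq_lattice_basis smooth_fan_unimodular[OF fan] assms(3) by blast
  obtain a where a: "\<forall>t\<in>\<tau>. a t \<ge> 0" "e = (\<Sum>t\<in>\<tau>. a t *\<^sub>R t)"
    using \<tau>(2) by (rule pos_coneE)
  have a_pos: "\<forall>t\<in>\<tau>. a t \<in> \<int> \<and> a t > 0"
    using lattice_basis_coeff_Ints[OF basis assms(4) a(2)] image_cone_coeffs_pos[OF fan img a(2,1)]
    by blast
  have rays_eq: "rays \<Sigma> = insert (- e) \<tau>" and "- e \<notin> \<tau>"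
    using smooth_fan_cone_subset_rays[OF fan \<tau>(1)] assms(5) by blast+
  have w_eq: "- e = - (\<Sum>t\<in>\<tau>. a t *\<^sub>R t)"
    using a(2) by simp
  note Pn = one_extra_ray_coeff[OF complete \<tau>(1) assms(3) rays_eq \<open>- e \<notin> \<tau>\<close> w_eq a_pos]
    one_extra_ray_fan_eq[OF complete \<tau>(1) assms(3) rays_eq \<open>- e \<notin> \<tau>\<close> w_eq a_pos]
  have "e = \<Sum>\<tau>"
    using a(2) Pn(1) by simp
  then show ?thesis
    unfolding is_Pn_fan_def using basis Pn(2) by blast
qed

locale fano_refinement = X: fano_fan \<Sigma>X for \<Sigma>X :: "(real^'n) set set" +
  fixes \<Sigma>Y :: "(real^'n) set set"
  assumes complete_Y: "smooth_complete_fan \<Sigma>Y" and refines: "refines \<Sigma>X \<Sigma>Y"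
begin

lemma fan_Y: "smooth_fan \<Sigma>Y"
  using complete_Y by (rule complete_fan_smooth_fan)

lemma refined_cone:
  assumes "S \<in> \<Sigma>X"
  obtains T where "T \<in> \<Sigma>Y" "pos_cone S \<subseteq> pos_cone T"
  using refines assms unfolding refines_def by blast

lemma rays_Y_subset: "rays \<Sigma>Y \<subseteq> rays \<Sigma>X"
proof
  fix w assume w: "w \<in> rays \<Sigma>Y"
  obtain S where S: "S \<in> \<Sigma>X" "w \<in> pos_cone S"
    using complete_fan_cover[OF X.complete] by blast
  obtain T where T: "T \<in> \<Sigma>Y" "pos_cone S \<subseteq> pos_cone T"
    using refined_cone[OF S(1)] .
  have "w \<in> T"
    using ray_mem_cone[OF fan_Y w T(1)] S(2) T(2) by blast
  moreover have "independent S" "independent T"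
    using smooth_fan_unimodular[OF X.fan S(1)] smooth_fan_unimodular[OF fan_Y T(1)]
      unimodular_independent by blast+
  ultimately obtain s a where s: "s \<in> S" "a > 0" "s = a *\<^sub>R w"
    using generator_in_subcone T(2) S(2) by metis
  have "s \<in> rays \<Sigma>X"
    using smooth_fan_cone_subset_rays[OF X.fan S(1)] s(1) by blast
  then have "s = w"
    using unimodular_multiple_eq[OF ray_unimodular[OF X.fan] ray_unimodular[OF fan_Y w] s(3,2)]
    by blast
  then show "w \<in> rays \<Sigma>X"
    using \<open>s \<in> rays \<Sigma>X\<close> by simp
qed

lemma image_cone_in_fan: "image_cone \<Sigma>Y e \<tau> \<Longrightarrow> \<tau> \<in> \<Sigma>Y"
  unfolding image_cone_def by blast

lemma image_cone_independent: "image_cone \<Sigma>Y e \<tau> \<Longrightarrow> independent \<tau>"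
  using image_cone_in_fan smooth_fan_unimodular[OF fan_Y] unimodular_independent by blast

lemma image_cone_of_adjacent:
  assumes img: "image_cone \<Sigma>Y e \<tau>" and "adjacent \<Sigma>X e u"
  obtains T where "T \<in> \<Sigma>Y" "\<tau> \<subseteq> T" "u \<in> pos_cone T"
proof -
  obtain S where S: "S \<in> \<Sigma>X" "e \<in> S" "u \<in> S"
    using assms(2) unfolding adjacent_def by blast
  obtain T where T: "T \<in> \<Sigma>Y" "pos_cone S \<subseteq> pos_cone T"
    using refined_cone[OF S(1)] .
  have "finite S"
    using smooth_fan_unimodular[OF X.fan S(1)] unimodular_finite by blast
  then have "e \<in> pos_cone T" "u \<in> pos_cone T"
    using mem_pos_cone S(2,3) T(2) by blast+
  then show ?thesis
    using that T(1) img unfolding image_cone_def by blast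
qed

lemma rays_outside_star_nonadjacent:
  assumes img: "image_cone \<Sigma>Y e \<tau>"
  shows "rays_outside_star \<Sigma>Y \<tau> \<subseteq> nonadjacent_rays \<Sigma>X e"
proof
  fix w assume "w \<in> rays_outside_star \<Sigma>Y \<tau>"
  then have w: "w \<in> rays \<Sigma>Y" "insert w \<tau> \<notin> \<Sigma>Y"
    unfolding rays_outside_star_def by auto
  have "\<not> adjacent \<Sigma>X e w"
  proof
    assume "adjacent \<Sigma>X e w"
    then obtain T where T: "T \<in> \<Sigma>Y" "\<tau> \<subseteq> T" "w \<in> pos_cone T"
      using image_cone_of_adjacent[OF img] by blast
    then have "insert w \<tau> \<subseteq> T"
      using ray_mem_cone[OF fan_Y w(1)] by blast
    then show False
      using smooth_fan_face[OF fan_Y T(1)] w(2) by blast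
  qed
  then show "w \<in> nonadjacent_rays \<Sigma>X e"
    using rays_Y_subset w(1) unfolding nonadjacent_rays_def by blast
qed

lemma picard_number_drop_le_3:
  assumes "e \<in> rays \<Sigma>X" "image_cone \<Sigma>Y e \<tau>"
  shows "picard_number \<Sigma>Y - orbit_picard_number \<Sigma>Y \<tau> \<le> 3"
proof -
  have "finite (nonadjacent_rays \<Sigma>X e)"
    using finite_rays[OF X.fan] unfolding nonadjacent_rays_def by simp
  then have "card (rays_outside_star \<Sigma>Y \<tau>) \<le> card (nonadjacent_rays \<Sigma>X e)"
    using rays_outside_star_nonadjacent[OF assms(2)] by (rule card_mono)
  also have "\<dots> \<le> 3"
    using X.card_nonadjacent_rays_le_3[OF assms(1)] .
  finally show ?thesis
    using picard_number_minus_orbit_picard_number[OF fan_Y image_cone_in_fan[OF assms(2)]] by simp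
qed

lemma picard_number_le_3_of_point:
  assumes "e \<in> rays \<Sigma>X" "image_cone \<Sigma>Y e \<tau>" "card \<tau> = CARD('n)"
  shows "picard_number \<Sigma>Y \<le> 3"
  using picard_number_drop_le_3[OF assms(1,2)]
    orbit_picard_number_maximal[OF fan_Y image_cone_in_fan[OF assms(2)] assms(3)] by simp

context
  fixes e \<tau>
  assumes e: "e \<in> rays \<Sigma>X" "image_cone \<Sigma>Y e \<tau>" and point: "card \<tau> = CARD('n)"
begin

lemma point_adjacent_in_image_cone:
  assumes "adjacent \<Sigma>X e u"
  shows "u \<in> pos_cone \<tau>"
proof -
  obtain T where T: "T \<in> \<Sigma>Y" "\<tau> \<subseteq> T" "u \<in> pos_cone T"
    using image_cone_of_adjacent[OF e(2) assms] .
  have "finite T" "card T \<le> CARD('n)"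
    using smooth_fan_unimodular[OF fan_Y T(1)] unimodular_finite unimodular_card_le by blast+
  then have "T = \<tau>"
    using T(2) point by (metis card_seteq)
  then show ?thesis
    using T(3) by simp
qed

lemma point_nonadjacent_rays: "rays \<Sigma>Y - \<tau> \<subseteq> nonadjacent_rays \<Sigma>X e"
  using rays_outside_star_nonadjacent[OF e(2)]
    rays_outside_star_maximal[OF fan_Y image_cone_in_fan[OF e(2)] point] by simp

lemma point_rays_outside_nonempty: "rays \<Sigma>Y - \<tau> \<noteq> {}"
proof -
  have "e \<in> pos_cone \<tau>"
    using e(2) unfolding image_cone_def by blast
  then obtain w where "w \<in> rays \<Sigma>Y" "w \<notin> \<tau>"
    using complete_fan_ray_outside_cone[OF complete_Y image_cone_in_fan[OF e(2)] _
        ray_nonzero[OF X.fan e(1)]] by blast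
  then show ?thesis
    by blast
qed

end

context
  fixes e e' \<tau>
  assumes e: "e \<in> rays \<Sigma>X" "image_cone \<Sigma>Y e \<tau>" and e': "e' \<in> rays \<Sigma>X" "image_cone \<Sigma>Y e' \<tau>"
    and "e \<noteq> e'" and point: "card \<tau> = CARD('n)"
begin

text \<open>A ray w of Y outside \<tau> is adjacent in X to neither e nor e'. Unless w = -e or w = -e',
  this forces w + e + e' = 0, and then -e' = e + w lies in a cone of X containing e, whose image
  is \<tau>; but \<tau> also contains e'.\<close>
lemma point_rays_outside_subset: "rays \<Sigma>Y - \<tau> \<subseteq> {- e, - e'}"
proof
  fix w assume w: "w \<in> rays \<Sigma>Y - \<tau>"
  show "w \<in> {- e, - e'}"
  proof (rule ccontr)
    assume "w \<notin> {- e, - e'}"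
    then have "e \<noteq> - w" "e' \<noteq> - w" "w \<noteq> - e"
      by auto
    have wX: "w \<in> rays \<Sigma>X"
      using rays_Y_subset w by blast
    have nonadj: "w \<in> nonadjacent_rays \<Sigma>X e" "w \<in> nonadjacent_rays \<Sigma>X e'"
      using point_nonadjacent_rays[OF e point] point_nonadjacent_rays[OF e' point] w by blast+
    then have "e \<in> nonadjacent_rays \<Sigma>X w" "e' \<in> nonadjacent_rays \<Sigma>X w"
      using e(1) e'(1) adjacent_sym unfolding nonadjacent_rays_def by blast+
    then have sum_zero: "w + e + e' = 0"
      using X.nonadjacent_pair_sum_zero[OF wX] \<open>e \<noteq> - w\<close> \<open>e' \<noteq> - w\<close> \<open>e \<noteq> e'\<close> by blast
    have "e + w = (w + e + e') - e'"
      by (simp add: algebra_simps)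
    then have "e + w = - e'"
      by (simp add: sum_zero)
    moreover have "adjacent \<Sigma>X e (e + w)"
      using X.nonadjacent_sum_adjacent(2)[OF e(1) wX] nonadj(1) \<open>w \<noteq> - e\<close>
      unfolding nonadjacent_rays_def by blast
    ultimately have "- e' \<in> pos_cone \<tau>"
      using point_adjacent_in_image_cone[OF e point] by simp
    moreover have "e' \<in> pos_cone \<tau>"
      using e'(2) unfolding image_cone_def by blast
    ultimately show False
      using pos_cone_pointed[OF image_cone_independent[OF e(2)]] ray_nonzero[OF X.fan e'(1)]
      by blast
  qed
qed

lemma point_rays_outside_not_both: "\<not> {- e, - e'} \<subseteq> rays \<Sigma>Y - \<tau>"
proof
  assume "{- e, - e'} \<subseteq> rays \<Sigma>Y - \<tau>"
  then have "- e' \<in> nonadjacent_rays \<Sigma>X e" "- e \<in> nonadjacent_rays \<Sigma>X e'"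
    using point_nonadjacent_rays[OF e point] point_nonadjacent_rays[OF e' point] by blast+
  then have "- e' \<in> rays \<Sigma>X" "\<not> adjacent \<Sigma>X e (- e')" "- e \<in> rays \<Sigma>X" "\<not> adjacent \<Sigma>X e' (- e)"
    unfolding nonadjacent_rays_def by blast+
  moreover have "- e' \<noteq> - e" "- e \<noteq> - e'"
    using \<open>e \<noteq> e'\<close> by simp_all
  ultimately have "adjacent \<Sigma>X e (e + - e')" "adjacent \<Sigma>X e' (e' + - e)"
    using X.nonadjacent_sum_adjacent(2) e(1) e'(1) by blast+
  then have "e - e' \<in> pos_cone \<tau>" "- (e - e') \<in> pos_cone \<tau>"
    using point_adjacent_in_image_cone[OF e point] point_adjacent_in_image_cone[OF e' point]
    by simp_all
  then have "e - e' = 0"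
    by (rule pos_cone_pointed[OF image_cone_independent[OF e(2)]])
  then show False
    using \<open>e \<noteq> e'\<close> by simp
qed

lemma point_rays_outside_eq: "rays \<Sigma>Y - \<tau> = {- e} \<or> rays \<Sigma>Y - \<tau> = {- e'}"
  using point_rays_outside_subset point_rays_outside_not_both
    point_rays_outside_nonempty[OF e point] by blast

end

lemma exceptional_over_point_subset:
  assumes e: "e \<in> rays \<Sigma>X" "image_cone \<Sigma>Y e \<tau>" and point: "card \<tau> = CARD('n)"
    and "\<not> is_Pn_fan \<Sigma>Y"
  shows "exceptional_over \<Sigma>X \<Sigma>Y \<tau> \<subseteq> {e}"
proof
  fix e' assume "e' \<in> exceptional_over \<Sigma>X \<Sigma>Y \<tau>"
  then have e': "e' \<in> rays \<Sigma>X" "image_cone \<Sigma>Y e' \<tau>"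
    unfolding exceptional_over_def by blast+
  show "e' \<in> {e}"
  proof (rule ccontr)
    assume "e' \<notin> {e}"
    then have "rays \<Sigma>Y - \<tau> = {- e} \<or> rays \<Sigma>Y - \<tau> = {- e'}"
      using point_rays_outside_eq[OF e e' _ point] by simp
    then have "is_Pn_fan \<Sigma>Y"
      using complete_fan_is_Pn_fan[OF complete_Y _ point] ray_lattice_pts[OF X.fan] e e' by blast
    then show False
      using assms(4) by blast
  qed
qed

lemma card_exceptional_over_point_le_1:
  assumes e: "e \<in> rays \<Sigma>X" "image_cone \<Sigma>Y e \<tau>" and point: "card \<tau> = CARD('n)"
  shows "card (exceptional_over \<Sigma>X \<Sigma>Y \<tau> - {e}) \<le> 1"
proof -
  obtain w where w: "w \<in> rays \<Sigma>Y - \<tau>"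
    using point_rays_outside_nonempty[OF e point] by blast
  have unique: "a = b" if a: "a \<in> exceptional_over \<Sigma>X \<Sigma>Y \<tau> - {e}"
    and b: "b \<in> exceptional_over \<Sigma>X \<Sigma>Y \<tau> - {e}" for a b
  proof (rule ccontr)
    assume "a \<noteq> b"
    have a': "a \<in> rays \<Sigma>X" "image_cone \<Sigma>Y a \<tau>" "e \<noteq> a"
      and b': "b \<in> rays \<Sigma>X" "image_cone \<Sigma>Y b \<tau>" "e \<noteq> b"
      using a b unfolding exceptional_over_def by blast+
    have "w \<in> {- e, - a}" "w \<in> {- e, - b}" "w \<in> {- a, - b}"
      using point_rays_outside_subset[OF e a' point] point_rays_outside_subset[OF e b' point]
        point_rays_outside_subset[OF a'(1,2) b'(1,2) \<open>a \<noteq> b\<close> point] w by blast+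
    then show False
      using \<open>a \<noteq> b\<close> a'(3) b'(3) by auto
  qed
  have "finite (exceptional_over \<Sigma>X \<Sigma>Y \<tau> - {e})"
    using finite_rays[OF X.fan] unfolding exceptional_over_def by simp
  then have "card (exceptional_over \<Sigma>X \<Sigma>Y \<tau> - {e}) \<le> Suc 0"
    using card_le_Suc0_iff_eq unique by blast
  then show ?thesis
    by simp
qed

end

theorem corollary4p2:
  fixes \<Sigma>X \<Sigma>Y :: "(real^'n) set set"
  assumes "toric_fano \<Sigma>X"
    and "smooth_complete_fan \<Sigma>Y"
    and "refines \<Sigma>X \<Sigma>Y"
  shows "\<forall>e\<in>rays \<Sigma>X. \<forall>\<tau>. image_cone \<Sigma>Y e \<tau> \<longrightarrow>
           picard_number \<Sigma>Y - orbit_picard_number \<Sigma>Y \<tau> \<le> 3 \<and>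
           (card \<tau> = CARD('n) \<longrightarrow>
              picard_number \<Sigma>Y \<le> 3 \<and>
              (\<not> is_Pn_fan \<Sigma>Y \<longrightarrow> exceptional_over \<Sigma>X \<Sigma>Y \<tau> \<subseteq> {e}) \<and>
              (is_Pn_fan \<Sigma>Y \<longrightarrow> card (exceptional_over \<Sigma>X \<Sigma>Y \<tau> - {e}) \<le> 1))"
proof -
  interpret fano_refinement \<Sigma>X \<Sigma>Y
    using assms by (simp add: fano_refinement_def fano_refinement_axioms_def fano_fan_def)
  show ?thesis
    using picard_number_drop_le_3 picard_number_le_3_of_point exceptional_over_point_subset
      card_exceptional_over_point_le_1 by blast
qed

end
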